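(* For pairs of reals write $(a,b) \succeq (a',b')$ if $a \ge a'$ and $a+b \ge a'+b'$. Let $a,b,c,d,a',b',c',d'$ be nonnegative reals with $a' \ge b'$ and $c' \ge d'$. If $(a,b) \succeq (a',b')$ and $(c,d) \succeq (c',d')$, then $(ac,bd) \succeq (a'c',b'd')$. *)

theory Defs
  imports Main "HOL.Real"
begin

definition pair_dom :: "real \<times> real \<Rightarrow> real \<times> real \<Rightarrow> bool" where
  "pair_dom p q \<longleftrightarrow> fst p \<ge> fst q \<and> fst p + snd p \<ge> fst q + snd q"

end

theory Submission
  imports Defs
begin

text \<open>Replacing \<open>d\<close> by \<open>e = min c d\<close> keeps \<open>(c, e) \<succeq> (c', d')\<close> (because \<open>c' \<ge> d'\<close>) and
  makes \<open>c \<ge> e\<close>. Multiplying a dominance by a pair \<open>(s, t)\<close> with \<open>s \<ge> t \<ge> 0\<close> componentwise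
  preserves it, so \<open>(ac, bd) \<succeq> (ac, be) \<succeq> (a'c, b'e) \<succeq> (a'c', b'd')\<close>, the last step using
  \<open>a' \<ge> b'\<close>.\<close>

lemma pair_dom_trans [trans]: "pair_dom p q \<Longrightarrow> pair_dom q r \<Longrightarrow> pair_dom p r"
  unfolding pair_dom_def by linarith

lemma pair_dom_snd_mono: "y' \<le> y \<Longrightarrow> pair_dom (x, y) (x, y')"
  unfolding pair_dom_def by simp

lemma pair_dom_scale:
  assumes "pair_dom (x, y) (x', y')" "0 \<le> t" "t \<le> s"
  shows "pair_dom (s * x, t * y) (s * x', t * y')"
proof -
  have x: "x' \<le> x" and sum: "x' + y' \<le> x + y"
    using assms(1) by (auto simp: pair_dom_def)
  have "s * x' \<le> s * x"
    using x assms(2,3) by (simp add: mult_left_mono)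
  moreover have "(s - t) * x' + t * (x' + y') \<le> (s - t) * x + t * (x + y)"
    using x sum assms(2,3) by (simp add: add_mono mult_left_mono)
  ultimately show ?thesis
    by (simp add: pair_dom_def algebra_simps)
qed

lemma pair_dom_min_snd:
  assumes "pair_dom (c, d) (c', d')" "d' \<le> c'"
  shows "pair_dom (c, min c d) (c', d')"
  using assms by (auto simp: pair_dom_def min_def)

theorem lemma4p5:
  fixes a b c d a' b' c' d' :: real
  assumes "a \<ge> 0" "b \<ge> 0" "c \<ge> 0" "d \<ge> 0"
    and "a' \<ge> 0" "b' \<ge> 0" "c' \<ge> 0" "d' \<ge> 0"
    and "a' \<ge> b'" "c' \<ge> d'"
    and "pair_dom (a, b) (a', b')" "pair_dom (c, d) (c', d')"
  shows "pair_dom (a * c, b * d) (a' * c', b' * d')"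
proof -
  define e where "e = min c d"
  have "pair_dom (a * c, b * d) (a * c, b * e)"
    using assms(2) by (intro pair_dom_snd_mono) (simp add: e_def mult_left_mono)
  also have "pair_dom (a * c, b * e) (a' * c, b' * e)"
    using pair_dom_scale[OF assms(11), of e c] assms(3,4)
    by (simp add: e_def mult.commute)
  also have "pair_dom (a' * c, b' * e) (a' * c', b' * d')"
    using pair_dom_min_snd[OF assms(12,10)] assms(6,9)
    by (intro pair_dom_scale) (simp_all add: e_def)
  finally show ?thesis .
qed

end
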